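(* If $\Lambda$ is a Legendrian knot with $4|\operatorname{rot}(\Lambda)|+\operatorname{tb}(\Lambda)\ge 0$, then $$m(\Lambda)\ge\left\lceil\sqrt{4|\operatorname{rot}(\Lambda)|+\operatorname{tb}(\Lambda)}\right\rceil.$$
   Context: Legendrian knots are taken in the standard contact structure on $\mathbb{R}^3$ and represented by front ($xz$-) projections, which have cusps in place of vertical tangencies and in which the strand of more negative slope is the overstrand at every crossing. For an oriented front with $P$ positive crossings, $N$ negative crossings, $C$ cusps, $D$ downward-oriented and $U$ upward-oriented cusps, the Thurston–Bennequin number is $\operatorname{tb}=P-N-\frac12C$ and the rotation number is $\operatorname{rot}=\frac12(D-U)$ (Legendrian isotopy invariants; the sign of $\operatorname{rot}$ depends on orientation). Legendrian mosaic tiles: a square tile whose four edge midpoints are potential connection points; the tiles are $T_0$ (empty); $T_1,\dots,T_4$ (a single arc joining midpoints of two adjacent edges, one per pair of adjacent edges); $T_5,T_6$ (a segment joining midpoints of opposite edges); $T_7,T_8$ (two disjoint arcs each joining adjacent edges, using all four midpoints); $T_{10}$ (two crossing segments joining opposite edges). A Legendrian $n$-mosaic is an $n\times n$ array of these tiles with the array rotated $45^\circ$ counterclockwise so the strands form a front diagram (after rotation $T_2$, $T_4$ contain one cusp and $T_8$ two cusps; $T_1,T_3,T_7$ contain none; in $T_{10}$ the negative-slope strand is over). It is suitably connected if connection points agree across shared edges and none lies on the outer boundary. The mosaic number $m(\Lambda)$ of a Legendrian knot $\Lambda$ is the smallest $n$ such that some suitably connected Legendrian $n$-mosaic depicts a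 front of a Legendrian knot Legendrian isotopic to $\Lambda$. *)

theory Defs
  imports Complex_Main
begin

text \<open>Edge midpoints of a (pre-rotation) square tile: north, east, south, west.
  Rows are indexed top to bottom, columns left to right.  After rotating the array
  45 degrees counterclockwise, N goes to the upper left, E to the upper right,
  S to the lower right and W to the lower left.\<close>
datatype edge = eN | eE | eS | eW

text \<open>Legendrian mosaic tiles (there is no T9).\<close>
datatype tile = T0 | T1 | T2 | T3 | T4 | T5 | T6 | T7 | T8 | T10

text \<open>T1, T3 (and T7) join N-E / S-W (no cusp after rotation); T2, T4 (and T8) join
  N-W / E-S (one cusp each after rotation); T5 joins W-E, T6 joins N-S;
  in T10 the N-S strand (negative slope after rotation) is the over strand.\<close>
fun arcs :: "tile \<Rightarrow> edge set set" where
  "arcs T0 = {}"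
| "arcs T1 = {{eS, eW}}"
| "arcs T2 = {{eW, eN}}"
| "arcs T3 = {{eN, eE}}"
| "arcs T4 = {{eE, eS}}"
| "arcs T5 = {{eW, eE}}"
| "arcs T6 = {{eN, eS}}"
| "arcs T7 = {{eN, eE}, {eS, eW}}"
| "arcs T8 = {{eN, eW}, {eE, eS}}"
| "arcs T10 = {{eN, eS}, {eW, eE}}"

definition conn :: "tile \<Rightarrow> edge set" where
  "conn t = \<Union> (arcs t)"

type_synonym mosaic = "nat \<Rightarrow> nat \<Rightarrow> tile"

text \<open>A visit of an oriented traversal: tile position (row, column), entry edge, exit edge.\<close>
type_synonym visit = "nat \<times> nat \<times> edge \<times> edge"

fun step :: "nat \<times> nat \<Rightarrow> edge \<Rightarrow> nat \<times> nat" where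
  "step (i, j) eN = (i - 1, j)"
| "step (i, j) eS = (Suc i, j)"
| "step (i, j) eE = (i, Suc j)"
| "step (i, j) eW = (i, j - 1)"

fun opp :: "edge \<Rightarrow> edge" where
  "opp eN = eS" | "opp eS = eN" | "opp eE = eW" | "opp eW = eE"

fun vpos :: "visit \<Rightarrow> nat \<times> nat" where "vpos (i, j, a, b) = (i, j)"
fun ventry :: "visit \<Rightarrow> edge" where "ventry (i, j, a, b) = a"
fun vexit :: "visit \<Rightarrow> edge" where "vexit (i, j, a, b) = b"
fun varc :: "visit \<Rightarrow> nat \<times> nat \<times> edge set" where "varc (i, j, a, b) = (i, j, {a, b})"

definition suitably_connected :: "nat \<Rightarrow> mosaic \<Rightarrow> bool" where
  "suitably_connected n M \<longleftrightarrow>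
     (\<forall>i<n. \<forall>j<n.
        (eN \<in> conn (M i j) \<longleftrightarrow> 0 < i \<and> eS \<in> conn (M (i - 1) j)) \<and>
        (eW \<in> conn (M i j) \<longleftrightarrow> 0 < j \<and> eE \<in> conn (M i (j - 1))) \<and>
        (eS \<in> conn (M i j) \<longrightarrow> Suc i < n) \<and>
        (eE \<in> conn (M i j) \<longrightarrow> Suc j < n))"

text \<open>vs is an oriented traversal of the diagram as a single closed curve passing through
  every strand of every tile exactly once (so the depicted link is a knot).\<close>
definition knot_traversal :: "nat \<Rightarrow> mosaic \<Rightarrow> visit list \<Rightarrow> bool" where
  "knot_traversal n M vs \<longleftrightarrow>
     vs \<noteq> [] \<and>
     (\<forall>v\<in>set vs. fst (vpos v) < n \<and> snd (vpos v) < n \<and> ventry v \<noteq> vexit v \<and>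
         {ventry v, vexit v} \<in> arcs (M (fst (vpos v)) (snd (vpos v)))) \<and>
     (\<forall>k<length vs.
         vpos (vs ! ((k + 1) mod length vs)) = step (vpos (vs ! k)) (vexit (vs ! k)) \<and>
         ventry (vs ! ((k + 1) mod length vs)) = opp (vexit (vs ! k))) \<and>
     distinct (map varc vs) \<and>
     (\<forall>i<n. \<forall>j<n. \<forall>A\<in>arcs (M i j). \<exists>v\<in>set vs. varc v = (i, j, A))"

definition legendrian_knot_mosaic :: "nat \<Rightarrow> mosaic \<Rightarrow> visit list \<Rightarrow> bool" where
  "legendrian_knot_mosaic n M vs \<longleftrightarrow> suitably_connected n M \<and> knot_traversal n M vs"

text \<open>Cusps (tiles N-W and E-S after rotation); downward means traversed N to W or E to S.\<close>
definition down_cusps :: "visit list \<Rightarrow> nat" where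
  "down_cusps vs = length (filter (\<lambda>v. (ventry v, vexit v) = (eN, eW) \<or> (ventry v, vexit v) = (eE, eS)) vs)"

definition up_cusps :: "visit list \<Rightarrow> nat" where
  "up_cusps vs = length (filter (\<lambda>v. (ventry v, vexit v) = (eW, eN) \<or> (ventry v, vexit v) = (eS, eE)) vs)"

text \<open>Crossings are counted through their over strand (N-S strand of a T10 tile).
  With the over strand direction o and under strand direction u, the crossing is
  positive iff o \<times> u > 0 (right-handed), i.e. iff (N\<rightarrow>S over, W\<rightarrow>E under) or
  (S\<rightarrow>N over, E\<rightarrow>W under).\<close>
definition pos_crossings :: "mosaic \<Rightarrow> visit list \<Rightarrow> nat" where
  "pos_crossings M vs = length (filter (\<lambda>v. M (fst (vpos v)) (snd (vpos v)) = T10 \<and>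
      ((ventry v, vexit v) = (eN, eS) \<and> (fst (vpos v), snd (vpos v), eW, eE) \<in> set vs \<or>
       (ventry v, vexit v) = (eS, eN) \<and> (fst (vpos v), snd (vpos v), eE, eW) \<in> set vs)) vs)"

definition neg_crossings :: "mosaic \<Rightarrow> visit list \<Rightarrow> nat" where
  "neg_crossings M vs = length (filter (\<lambda>v. M (fst (vpos v)) (snd (vpos v)) = T10 \<and>
      ((ventry v, vexit v) = (eN, eS) \<and> (fst (vpos v), snd (vpos v), eE, eW) \<in> set vs \<or>
       (ventry v, vexit v) = (eS, eN) \<and> (fst (vpos v), snd (vpos v), eW, eE) \<in> set vs)) vs)"

definition tb_mosaic :: "mosaic \<Rightarrow> visit list \<Rightarrow> real" where
  "tb_mosaic M vs = real (pos_crossings M vs) - real (neg_crossings M vs)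
                     - real (down_cusps vs + up_cusps vs) / 2"

definition rot_mosaic :: "visit list \<Rightarrow> real" where
  "rot_mosaic vs = (real (down_cusps vs) - real (up_cusps vs)) / 2"

text \<open>Mosaic number of a Legendrian knot K, relative to the relation
  depicts n M vs K: "the oriented Legendrian n-mosaic (M, vs) depicts a front of a
  Legendrian knot Legendrian isotopic to K".\<close>
definition mosaic_number :: "(nat \<Rightarrow> mosaic \<Rightarrow> visit list \<Rightarrow> 'k \<Rightarrow> bool) \<Rightarrow> 'k \<Rightarrow> nat" where
  "mosaic_number depicts K = (LEAST n. \<exists>M vs. depicts n M vs K)"

end

theory Submission
  imports Defs
begin

text \<open>Give every traversed strand of the front the weight
  \<open>(2s - 1/2)[down cusp] + (-2s - 1/2)[up cusp] + [over strand of a positive crossing]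
   - [over strand of a negative crossing] + s \<cdot> (height change)\<close>,
  where \<open>s = sgn rot\<close>. Along the closed traversal the height changes telescope to 0, so the
  total weight is \<open>4s rot + tb = 4|rot| + tb\<close>. On the other hand, a case check over the tiles
  shows that the strands of a single tile never weigh more than 1 in total, so the total weight
  is at most \<open>n\<^sup>2\<close> for an \<open>n\<close>-mosaic.\<close>

text \<open>After the rotation, leaving a tile through N or E raises the front by one unit:
  tile \<open>(i, j)\<close> sits at height \<open>j - i\<close>.\<close>

fun height_change :: "edge \<Rightarrow> real" where
  "height_change eN = 1" | "height_change eE = 1" | "height_change eS = -1" | "height_change eW = -1"

definition down_cusp :: "edge \<Rightarrow> edge \<Rightarrow> bool" where
  "down_cusp a b \<longleftrightarrow> (a, b) = (eN, eW) \<or> (a, b) = (eE, eS)"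

definition up_cusp :: "edge \<Rightarrow> edge \<Rightarrow> bool" where
  "up_cusp a b \<longleftrightarrow> (a, b) = (eW, eN) \<or> (a, b) = (eS, eE)"

definition positive_crossing :: "tile \<Rightarrow> (edge \<times> edge) set \<Rightarrow> edge \<Rightarrow> edge \<Rightarrow> bool" where
  "positive_crossing T S a b \<longleftrightarrow> T = T10 \<and>
     ((a, b) = (eN, eS) \<and> (eW, eE) \<in> S \<or> (a, b) = (eS, eN) \<and> (eE, eW) \<in> S)"

definition negative_crossing :: "tile \<Rightarrow> (edge \<times> edge) set \<Rightarrow> edge \<Rightarrow> edge \<Rightarrow> bool" where
  "negative_crossing T S a b \<longleftrightarrow> T = T10 \<and>
     ((a, b) = (eN, eS) \<and> (eE, eW) \<in> S \<or> (a, b) = (eS, eN) \<and> (eW, eE) \<in> S)"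

definition strand_weight :: "real \<Rightarrow> tile \<Rightarrow> (edge \<times> edge) set \<Rightarrow> edge \<Rightarrow> edge \<Rightarrow> real" where
  "strand_weight s T S a b =
     (if down_cusp a b then 2 * s - 1/2 else if up_cusp a b then - 2 * s - 1/2 else 0)
     + of_bool (positive_crossing T S a b) - of_bool (negative_crossing T S a b)
     + s * height_change b"

definition oriented_strands :: "tile \<Rightarrow> (edge \<times> edge) set" where
  "oriented_strands T = {(a, b). a \<noteq> b \<and> {a, b} \<in> arcs T}"

lemma oriented_strands_simps:
  "oriented_strands T0 = {}"
  "oriented_strands T1 = {(eS,eW),(eW,eS)}"
  "oriented_strands T2 = {(eW,eN),(eN,eW)}"
  "oriented_strands T3 = {(eN,eE),(eE,eN)}"
  "oriented_strands T4 = {(eE,eS),(eS,eE)}"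
  "oriented_strands T5 = {(eW,eE),(eE,eW)}"
  "oriented_strands T6 = {(eN,eS),(eS,eN)}"
  "oriented_strands T7 = {(eN,eE),(eE,eN),(eS,eW),(eW,eS)}"
  "oriented_strands T8 = {(eN,eW),(eW,eN),(eE,eS),(eS,eE)}"
  "oriented_strands T10 = {(eN,eS),(eS,eN),(eW,eE),(eE,eW)}"
  by (auto simp: oriented_strands_def doubleton_eq_iff)

lemma sum_subset_eq_sum_if:
  "finite A \<Longrightarrow> S \<subseteq> A \<Longrightarrow> sum f S = (\<Sum>x\<in>A. if x \<in> S then f x else 0)"
  by (simp add: sum.inter_restrict[symmetric] Int_absorb1)

lemma tile_weight_le_1:
  assumes s: "\<bar>s\<bar> \<le> 1"
    and S: "S \<subseteq> oriented_strands T"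
    and one_direction: "\<And>a b. (a, b) \<in> S \<Longrightarrow> (b, a) \<notin> S"
  shows "(\<Sum>(a, b)\<in>S. strand_weight s T S a b) \<le> 1"
proof -
  have "finite (oriented_strands T)" by (cases T) (simp_all add: oriented_strands_simps)
  then have "(\<Sum>(a, b)\<in>S. strand_weight s T S a b) =
      (\<Sum>x\<in>oriented_strands T. if x \<in> S then case x of (a, b) \<Rightarrow> strand_weight s T S a b else 0)"
    using S by (rule sum_subset_eq_sum_if)
  also have "\<dots> \<le> 1"
    using one_direction s
    by (cases T; simp add: oriented_strands_simps strand_weight_def down_cusp_def up_cusp_def
          positive_crossing_def negative_crossing_def; fastforce)
  finally show ?thesis .
qed


lemma sum_lessThan_mod_shift:
  fixes L :: nat
  assumes "0 < L"
  shows "(\<Sum>k<L. g ((k + 1) mod L)) = (\<Sum>k<L. g k)"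
proof -
  obtain m where L: "L = Suc m" using assms by (cases L) auto
  have "(\<Sum>k<Suc m. g ((k + 1) mod Suc m)) = (\<Sum>k<m. g (Suc k)) + g 0"
    by (simp add: sum.lessThan_Suc)
  also have "\<dots> = (\<Sum>k<Suc m. g k)"
    by (simp only: sum.lessThan_Suc_shift add.commute)
  finally show ?thesis using L by simp
qed

lemma sum_height_change_eq_0:
  assumes "legendrian_knot_mosaic n M vs"
  shows "(\<Sum>v\<in>set vs. height_change (vexit v)) = 0"
proof -
  have sc: "suitably_connected n M" and kt: "knot_traversal n M vs"
    using assms by (auto simp: legendrian_knot_mosaic_def)
  define L where "L = length vs"
  define height where "height v = real (snd (vpos v)) - real (fst (vpos v))" for v
  have "0 < L" using kt by (auto simp: knot_traversal_def L_def)
  have telescope: "height_change (vexit (vs ! k)) = height (vs ! ((k + 1) mod L)) - height (vs ! k)"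
    if "k < L" for k
  proof -
    obtain i j a b where v: "vs ! k = (i, j, a, b)" by (cases "vs ! k") auto
    have "vs ! k \<in> set vs" using \<open>k < L\<close> by (simp add: L_def)
    then have ij: "i < n" "j < n" and "{a, b} \<in> arcs (M i j)"
      using kt v by (auto simp: knot_traversal_def)
    then have "b \<in> conn (M i j)"
      by (auto simp: conn_def)
    with ij have "b = eN \<Longrightarrow> 0 < i" "b = eW \<Longrightarrow> 0 < j"
      using sc by (auto simp: suitably_connected_def)
    \<comment> \<open>so the truncated subtraction in \<open>step\<close> is harmless\<close>
    moreover have "vpos (vs ! ((k + 1) mod L)) = step (i, j) b"
      using kt \<open>k < L\<close> v by (auto simp: knot_traversal_def L_def)
    ultimately show ?thesis
      using v by (cases b) (auto simp: height_def of_nat_diff)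
  qed
  have "distinct vs" using kt by (auto simp: knot_traversal_def distinct_map)
  then have "(\<Sum>v\<in>set vs. height_change (vexit v)) = (\<Sum>k<L. height_change (vexit (vs ! k)))"
    by (simp add: sum_list_distinct_conv_sum_set[symmetric] sum_list_sum_nth L_def atLeast0LessThan)
  also have "\<dots> = (\<Sum>k<L. height (vs ! ((k + 1) mod L))) - (\<Sum>k<L. height (vs ! k))"
    by (simp add: telescope sum_subtractf)
  also have "\<dots> = 0"
    using sum_lessThan_mod_shift[OF \<open>0 < L\<close>] by simp
  finally show ?thesis .
qed

definition traversed_strands :: "visit list \<Rightarrow> nat \<Rightarrow> nat \<Rightarrow> (edge \<times> edge) set" where
  "traversed_strands vs i j = {(a, b). (i, j, a, b) \<in> set vs}"

definition visit_weight :: "real \<Rightarrow> mosaic \<Rightarrow> visit list \<Rightarrow> visit \<Rightarrow> real" where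
  "visit_weight s M vs v =
     (case v of (i, j, a, b) \<Rightarrow> strand_weight s (M i j) (traversed_strands vs i j) a b)"

lemma sum_visit_weight_eq:
  assumes "legendrian_knot_mosaic n M vs"
  shows "(\<Sum>v\<in>set vs. visit_weight s M vs v) = 4 * s * rot_mosaic vs + tb_mosaic M vs"
proof -
  have "distinct vs"
    using assms by (auto simp: legendrian_knot_mosaic_def knot_traversal_def distinct_map)
  then have count: "real (length (filter P vs)) = (\<Sum>v\<in>set vs. of_bool (P v))" for P
    by (simp add: distinct_length_filter Int_commute)
  have "(\<Sum>v\<in>set vs. visit_weight s M vs v) =
      (2 * s - 1/2) * real (down_cusps vs) + (- 2 * s - 1/2) * real (up_cusps vs)
      + real (pos_crossings M vs) - real (neg_crossings M vs)
      + s * (\<Sum>v\<in>set vs. height_change (vexit v))"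
    unfolding down_cusps_def up_cusps_def pos_crossings_def neg_crossings_def count
      sum_distrib_left sum_subtractf[symmetric] sum.distrib[symmetric]
    by (intro sum.cong refl, clarify)
      (simp add: visit_weight_def strand_weight_def down_cusp_def up_cusp_def
        positive_crossing_def negative_crossing_def traversed_strands_def)
  then show ?thesis
    unfolding sum_height_change_eq_0[OF assms] rot_mosaic_def tb_mosaic_def
    by (simp add: field_simps)
qed


lemma sum_visit_weight_le:
  assumes "legendrian_knot_mosaic n M vs" and "\<bar>s\<bar> \<le> 1"
  shows "(\<Sum>v\<in>set vs. visit_weight s M vs v) \<le> real n ^ 2"
proof -
  have kt: "knot_traversal n M vs" using assms(1) by (simp add: legendrian_knot_mosaic_def)
  have "inj_on varc (set vs)" using kt by (auto simp: knot_traversal_def distinct_map)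
  have tiles: "vpos ` set vs \<subseteq> {..<n} \<times> {..<n}"
    using kt by (auto simp: knot_traversal_def mem_Times_iff)
  have "(\<Sum>v\<in>set vs. visit_weight s M vs v) =
      (\<Sum>p\<in>{..<n} \<times> {..<n}. \<Sum>v\<in>{v \<in> set vs. vpos v = p}. visit_weight s M vs v)"
    by (rule sum.group[symmetric]) (use tiles in auto)
  also have "\<dots> \<le> (\<Sum>p\<in>{..<n} \<times> {..<n}. 1)"
  proof (rule sum_mono, clarify)
    fix i j
    let ?S = "traversed_strands vs i j"
    have visits: "{v \<in> set vs. vpos v = (i, j)} = (\<lambda>(a, b). (i, j, a, b)) ` ?S"
      by (force simp: traversed_strands_def)
    have "inj_on (\<lambda>(a, b). (i, j, a, b)) ?S" by (auto simp: inj_on_def)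
    then have "(\<Sum>v\<in>{v \<in> set vs. vpos v = (i, j)}. visit_weight s M vs v) =
        (\<Sum>(a, b)\<in>?S. strand_weight s (M i j) ?S a b)"
      unfolding visits by (simp add: sum.reindex visit_weight_def case_prod_unfold)
    also have "\<dots> \<le> 1"
    proof (rule tile_weight_le_1[OF assms(2)])
      show "?S \<subseteq> oriented_strands (M i j)"
        using kt by (force simp: traversed_strands_def oriented_strands_def knot_traversal_def)
      fix a b
      assume "(a, b) \<in> ?S"
      then have "(i, j, a, b) \<in> set vs" and "a \<noteq> b"
        using kt by (auto simp: traversed_strands_def knot_traversal_def)
      then show "(b, a) \<notin> ?S"
        using inj_onD[OF \<open>inj_on varc (set vs)\<close>, of "(i, j, b, a)" "(i, j, a, b)"]
        by (auto simp: traversed_strands_def insert_commute)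
    qed
    finally show "(\<Sum>v\<in>{v \<in> set vs. vpos v = (i, j)}. visit_weight s M vs v) \<le> 1" .
  qed
  also have "\<dots> = real n ^ 2" by (simp add: power2_eq_square)
  finally show ?thesis .
qed

lemma rot_tb_le_square:
  assumes "legendrian_knot_mosaic n M vs"
  shows "4 * \<bar>rot_mosaic vs\<bar> + tb_mosaic M vs \<le> real n ^ 2"
proof -
  let ?s = "sgn (rot_mosaic vs)"
  have "4 * \<bar>rot_mosaic vs\<bar> + tb_mosaic M vs = (\<Sum>v\<in>set vs. visit_weight ?s M vs v)"
    by (simp add: sum_visit_weight_eq[OF assms] abs_sgn)
  also have "\<dots> \<le> real n ^ 2"
    by (rule sum_visit_weight_le[OF assms]) (simp add: abs_sgn_eq)
  finally show ?thesis .
qed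

theorem theorem2p3:
  fixes depicts :: "nat \<Rightarrow> mosaic \<Rightarrow> visit list \<Rightarrow> 'k \<Rightarrow> bool"
    and tbL rotL :: "'k \<Rightarrow> real"
    and \<Lambda> :: 'k
  assumes depicts_mosaic: "\<And>n M vs K. depicts n M vs K \<Longrightarrow> legendrian_knot_mosaic n M vs"
    and invariants: "\<And>n M vs K. depicts n M vs K \<Longrightarrow>
           tb_mosaic M vs = tbL K \<and> \<bar>rot_mosaic vs\<bar> = \<bar>rotL K\<bar>"
    and has_mosaic: "\<exists>n M vs. depicts n M vs \<Lambda>"
    and hyp: "4 * \<bar>rotL \<Lambda>\<bar> + tbL \<Lambda> \<ge> 0"
  shows "int (mosaic_number depicts \<Lambda>) \<ge> \<lceil>sqrt (4 * \<bar>rotL \<Lambda>\<bar> + tbL \<Lambda>)\<rceil>"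
proof -
  define m where "m = mosaic_number depicts \<Lambda>"
  have "\<exists>M vs. depicts m M vs \<Lambda>"
    unfolding m_def mosaic_number_def using has_mosaic by (rule LeastI_ex)
  then obtain M vs where d: "depicts m M vs \<Lambda>" by blast
  have "4 * \<bar>rotL \<Lambda>\<bar> + tbL \<Lambda> \<le> real m ^ 2"
    using rot_tb_le_square[OF depicts_mosaic[OF d]] invariants[OF d] by simp
  then have "sqrt (4 * \<bar>rotL \<Lambda>\<bar> + tbL \<Lambda>) \<le> real m"
    using real_sqrt_le_mono by fastforce
  then show ?thesis by (simp add: m_def ceiling_le_iff)
qed

end
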